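(* Let $X=(x_1,\dots,x_n)\in(\mathbb{Z}_{12})^n$ have $n$ pairwise distinct entries. Let $G$ be a subgroup of the group $\mathrm{Aff}^*(\mathbb{Z}_{12})$ of invertible affine maps $\mathbb{Z}_{12}\to\mathbb{Z}_{12}$, acting componentwise on $(\mathbb{Z}_{12})^n$, and assume $f\{x_1,\dots,x_n\}\neq\{x_1,\dots,x_n\}$ for every non-identity $f\in G$. Let $\Sigma_n$ act on $(\mathbb{Z}_{12})^n$ by $\sigma(y_1,\dots,y_n)=(y_{\sigma^{-1}(1)},\dots,y_{\sigma^{-1}(n)})$. Let $\Sigma_nG$ be the subgroup of $\mathrm{Sym}((\mathbb{Z}_{12})^n)$ generated by $\Sigma_n$ and $G$ (an internal direct product, each element written uniquely as $\sigma g$ with $\sigma\in\Sigma_n$, $g\in G$), and let $\lambda(\Sigma_nG)$ be the subgroup of $\mathrm{Sym}(\Sigma_nGX)$ given by the action of $\Sigma_nG$ on the orbit $\Sigma_nGX$. Let $\rho(\Sigma_nG)\subseteq\mathrm{Sym}(\Sigma_nGX)$ consist of the maps $\rho(\nu h)$, $\nu\in\Sigma_n$, $h\in G$, defined by $$\rho(\nu h)\,\sigma g X:=\sigma g(\nu h)^{-1}X\quad(\sigma\in\Sigma_n,\ g\in G),$$ and let $\rho(\Sigma_n)=\{\rho(\nu):\nu\in\Sigma_n\}$, $\rho(G)=\{\rho(h):h\in G\}$, with $\lambda(\Sigma_n)$, $\lambda(G)$ defined analogously from the left actions. Then: (i) the restriction of $\rho(\Sigma_n)$ to $\Sigma_nX$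 is the dual group of $\lambda(\Sigma_n)$ in $\mathrm{Sym}(\Sigma_nX)$, and the restriction of $\rho(G)$ to $GX$ is the dual group of $\lambda(G)$ in $\mathrm{Sym}(GX)$; (ii) the subgroups $\rho(\Sigma_n)$ and $\rho(G)$ of $\mathrm{Sym}(\Sigma_nGX)$ commute, i.e. $\rho(\nu)\rho(h)=\rho(h)\rho(\nu)$ for all $\nu\in\Sigma_n$, $h\in G$; (iii) $\rho(\Sigma_nG)$ is the internal direct product of $\rho(\Sigma_n)$ and $\rho(G)$; (iv) if $Y\in\sigma GX$ (for some $\sigma\in\Sigma_n$) and $h\in G$, then $\rho(h)Y=\sigma\rho(h)\sigma^{-1}Y$.
   Context: $\mathrm{Sym}(S)$ denotes the group of all bijections of a set $S$. An invertible affine map of $\mathbb{Z}_{12}$ is $k\mapsto ak+b$ with $a$ a unit of $\mathbb{Z}_{12}$; it acts on $n$-tuples componentwise, and these maps commute with the permutation action of $\Sigma_n$. The dual group of a subgroup $A\le\mathrm{Sym}(S)$ acting simply transitively is the subgroup $B$ such that $A,B$ both act simply transitively and each is the centralizer of the other in $\mathrm{Sym}(S)$. A group $H$ is the internal direct product of subgroups $K,L$ if $K$ and $L$ commute, $K\cap L=\{e\}$, and every element of $H$ is $k\ell$ with $k\in K$, $\ell\in L$. *)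

theory Defs
  imports "HOL-Library.Numeral_Type" "HOL-Combinatorics.Permutations"
begin

text \<open>Z_12 is the ring type 12 from Numeral_Type. n-tuples are lists of length n,
  indexed by 0..n-1; Sigma_n is the set of permutations of {0..<n}.\<close>

type_synonym z12 = "12"

definition Aff_star :: "(z12 \<Rightarrow> z12) set" where
  "Aff_star = {(\<lambda>k. a * k + b) | a b :: z12. a dvd 1}"

definition Sn :: "nat \<Rightarrow> (nat \<Rightarrow> nat) set" where
  "Sn n = {\<sigma>. \<sigma> permutes {..<n}}"

definition perm_act :: "(nat \<Rightarrow> nat) \<Rightarrow> 'a list \<Rightarrow> 'a list" where
  "perm_act \<sigma> y = map (\<lambda>i. y ! inv \<sigma> i) [0..<length y]"

definition sg :: "(nat \<Rightarrow> nat) \<Rightarrow> ('a \<Rightarrow> 'a) \<Rightarrow> 'a list \<Rightarrow> 'a list" where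
  "sg \<sigma> g y = perm_act \<sigma> (map g y)"

definition orbit :: "(nat \<Rightarrow> nat) set \<Rightarrow> ('a \<Rightarrow> 'a) set \<Rightarrow> 'a list \<Rightarrow> 'a list set" where
  "orbit P H X = {sg \<sigma> g X | \<sigma> g. \<sigma> \<in> P \<and> g \<in> H}"

definition Sym :: "'a set \<Rightarrow> ('a \<Rightarrow> 'a) set" where
  "Sym S = {f. bij_betw f S S \<and> (\<forall>x. x \<notin> S \<longrightarrow> f x = x)}"

definition ext_on :: "'a set \<Rightarrow> ('a \<Rightarrow> 'a) \<Rightarrow> 'a \<Rightarrow> 'a" where
  "ext_on S f = (\<lambda>x. if x \<in> S then f x else x)"

definition simply_transitive :: "('a \<Rightarrow> 'a) set \<Rightarrow> 'a set \<Rightarrow> bool" where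
  "simply_transitive A S \<longleftrightarrow> (\<forall>x\<in>S. \<forall>y\<in>S. \<exists>!f. f \<in> A \<and> f x = y)"

definition centralizer_in :: "'a set \<Rightarrow> ('a \<Rightarrow> 'a) set \<Rightarrow> ('a \<Rightarrow> 'a) set" where
  "centralizer_in S A = {f \<in> Sym S. \<forall>a\<in>A. f \<circ> a = a \<circ> f}"

definition dual_group :: "'a set \<Rightarrow> ('a \<Rightarrow> 'a) set \<Rightarrow> ('a \<Rightarrow> 'a) set \<Rightarrow> bool" where
  "dual_group S A B \<longleftrightarrow> A \<subseteq> Sym S \<and> B \<subseteq> Sym S \<and>
     simply_transitive A S \<and> simply_transitive B S \<and>
     centralizer_in S A = B \<and> centralizer_in S B = A"

definition internal_direct_product :: "('a \<Rightarrow> 'a) set \<Rightarrow> ('a \<Rightarrow> 'a) set \<Rightarrow> ('a \<Rightarrow> 'a) set \<Rightarrow> bool" where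
  "internal_direct_product H K L \<longleftrightarrow>
     (\<forall>k\<in>K. \<forall>l\<in>L. k \<circ> l = l \<circ> k) \<and> K \<inter> L = {id} \<and>
     H = {k \<circ> l | k l. k \<in> K \<and> l \<in> L}"

text \<open>rho(nu h) (sigma g X) := sigma g (nu h)^{-1} X, on the orbit Sigma_n G X;
  (nu h)^{-1} = nu^{-1} h^{-1} is written explicitly.\<close>
definition rho :: "nat \<Rightarrow> (z12 \<Rightarrow> z12) set \<Rightarrow> z12 list \<Rightarrow> (nat \<Rightarrow> nat) \<Rightarrow> (z12 \<Rightarrow> z12)
    \<Rightarrow> z12 list \<Rightarrow> z12 list" where
  "rho n G X \<nu> h = ext_on (orbit (Sn n) G X)
     (\<lambda>Y. THE Z. \<exists>\<sigma>\<in>Sn n. \<exists>g\<in>G. Y = sg \<sigma> g X \<and> Z = sg \<sigma> g (sg (inv \<nu>) (inv h) X))"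

end

theory Submission
  imports Defs
begin

text \<open>Since G acts freely on the set of entries of X and these entries are distinct, the map
  \<open>(\<sigma>, g) \<mapsto> \<sigma> g X\<close> is a bijection from \<open>\<Sigma>\<^sub>n \<times> G\<close> onto the orbit. Transported along it,
  \<open>\<lambda>\<close> and \<open>\<rho>\<close> become the left and right regular representations of a group, which are
  simply transitive, commute, and are each other's centralizers. Moreover \<open>\<rho>\<close> is a
  homomorphism on \<open>\<Sigma>\<^sub>n \<times> G\<close>, which gives the commutation of \<open>\<rho>(\<Sigma>\<^sub>n)\<close> with \<open>\<rho>(G)\<close> and the
  direct product decomposition.\<close>

lemma Sym_apply_outside: "f \<in> Sym S \<Longrightarrow> x \<notin> S \<Longrightarrow> f x = x"
  by (simp add: Sym_def)

locale regular_representations =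
  fixes P :: "('b \<Rightarrow> 'b) set" and \<phi> :: "('b \<Rightarrow> 'b) \<Rightarrow> 'a" and S :: "'a set"
    and L R :: "('b \<Rightarrow> 'b) \<Rightarrow> 'a \<Rightarrow> 'a"
  assumes id_in_P: "id \<in> P"
    and comp_in_P: "p \<in> P \<Longrightarrow> q \<in> P \<Longrightarrow> p \<circ> q \<in> P"
    and inv_in_P: "p \<in> P \<Longrightarrow> inv p \<in> P"
    and bij_P: "p \<in> P \<Longrightarrow> bij p"
    and inj_on_\<phi>: "inj_on \<phi> P"
    and S_eq: "S = \<phi> ` P"
    and L_\<phi>: "p \<in> P \<Longrightarrow> q \<in> P \<Longrightarrow> L p (\<phi> q) = \<phi> (p \<circ> q)"
    and L_outside: "x \<notin> S \<Longrightarrow> L p x = x"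
    and R_\<phi>: "p \<in> P \<Longrightarrow> q \<in> P \<Longrightarrow> R p (\<phi> q) = \<phi> (q \<circ> inv p)"
    and R_outside: "x \<notin> S \<Longrightarrow> R p x = x"
begin

lemma comp_inv_cancel [simp]:
  assumes "p \<in> P"
  shows "p \<circ> inv p = id" "inv p \<circ> p = id" "p \<circ> (inv p \<circ> q) = q" "inv p \<circ> (p \<circ> q) = q"
    "inv (inv p) = p"
proof -
  have "p \<circ> inv p = id" "inv p \<circ> p = id"
    using surj_iff[THEN iffD1, OF bij_is_surj] inv_o_cancel[OF bij_is_inj] bij_P[OF assms]
    by blast+
  then show "p \<circ> inv p = id" "inv p \<circ> p = id" "p \<circ> (inv p \<circ> q) = q" "inv p \<circ> (p \<circ> q) = q"
    by (simp_all flip: comp_assoc)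
  show "inv (inv p) = p"
    using bij_P[OF assms] by (rule inv_inv_eq)
qed

lemma S_cases:
  assumes "x \<in> S"
  obtains q where "q \<in> P" "x = \<phi> q"
  using assms S_eq by blast

lemma L_Sym: "p \<in> P \<Longrightarrow> L p \<in> Sym S"
  unfolding Sym_def
  by (auto intro!: bij_betw_byWitness[where f' = "L (inv p)"] elim!: S_cases
      simp: L_\<phi> L_outside comp_in_P inv_in_P S_eq comp_assoc)

lemma simply_transitive_L: "simply_transitive {L p | p. p \<in> P} S"
  unfolding simply_transitive_def
proof (intro ballI)
  fix x y assume "x \<in> S" "y \<in> S"
  then obtain q r where q: "q \<in> P" "x = \<phi> q" and r: "r \<in> P" "y = \<phi> r"
    by (auto elim!: S_cases)
  show "\<exists>!f. f \<in> {L p | p. p \<in> P} \<and> f x = y"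
  proof (rule ex1I[where a = "L (r \<circ> inv q)"])
    show "L (r \<circ> inv q) \<in> {L p | p. p \<in> P} \<and> L (r \<circ> inv q) x = y"
      using q r by (auto simp: L_\<phi> comp_in_P inv_in_P comp_assoc)
  next
    fix f assume "f \<in> {L p | p. p \<in> P} \<and> f x = y"
    then obtain p where p: "p \<in> P" "f = L p" and "\<phi> (p \<circ> q) = \<phi> r"
      using q r by (auto simp: L_\<phi>)
    then have "p \<circ> q = r"
      using q r inj_on_\<phi> by (auto simp: comp_in_P dest: inj_onD)
    then have "p = r \<circ> inv q"
      using q by (auto simp: comp_assoc)
    then show "f = L (r \<circ> inv q)" using p by simp
  qed
qed

text \<open>Replacing \<open>\<phi>\<close> by \<open>\<phi> \<circ> inv\<close> exchanges the roles of the left and right representations.\<close>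
lemma swap: "regular_representations P (\<phi> \<circ> inv) S R L"
proof
  show "inj_on (\<phi> \<circ> inv) P"
  proof (rule inj_onI)
    fix p q assume p: "p \<in> P" and q: "q \<in> P" and "(\<phi> \<circ> inv) p = (\<phi> \<circ> inv) q"
    then have "\<phi> (inv p) = \<phi> (inv q)" by simp
    then have "inv p = inv q"
      by (rule inj_onD[OF inj_on_\<phi> _ inv_in_P[OF p] inv_in_P[OF q]])
    then show "p = q"
      using comp_inv_cancel(5)[OF p] comp_inv_cancel(5)[OF q] by metis
  qed
  have "P \<subseteq> inv ` P"
  proof
    fix p assume "p \<in> P"
    then show "p \<in> inv ` P"
      using image_eqI[of p inv "inv p"] inv_in_P by simp
  qed
  then have "inv ` P = P"
    using inv_in_P by blast
  then show "S = (\<phi> \<circ> inv) ` P"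
    by (metis S_eq image_comp)
  fix p q assume "p \<in> P" "q \<in> P"
  then show "R p ((\<phi> \<circ> inv) q) = (\<phi> \<circ> inv) (p \<circ> q)"
    and "L p ((\<phi> \<circ> inv) q) = (\<phi> \<circ> inv) (q \<circ> inv p)"
    by (simp_all add: R_\<phi> L_\<phi> inv_in_P o_inv_distrib bij_P)
qed (simp_all add: id_in_P comp_in_P inv_in_P bij_P L_outside R_outside)

lemma R_Sym: "p \<in> P \<Longrightarrow> R p \<in> Sym S"
proof -
  interpret swapped: regular_representations P "\<phi> \<circ> inv" S R L by (rule swap)
  show "p \<in> P \<Longrightarrow> R p \<in> Sym S" by (rule swapped.L_Sym)
qed

lemma R_L_commute:
  assumes "p \<in> P" "r \<in> P"
  shows "R p \<circ> L r = L r \<circ> R p"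
proof
  fix x
  show "(R p \<circ> L r) x = (L r \<circ> R p) x"
    using assms
    by (cases "x \<in> S")
      (auto elim!: S_cases simp: L_\<phi> R_\<phi> L_outside R_outside comp_in_P inv_in_P comp_assoc)
qed

lemma centralizer_L: "centralizer_in S {L p | p. p \<in> P} = {R p | p. p \<in> P}"
proof
  show "{R p | p. p \<in> P} \<subseteq> centralizer_in S {L p | p. p \<in> P}"
    using R_Sym R_L_commute by (auto simp: centralizer_in_def)
next
  show "centralizer_in S {L p | p. p \<in> P} \<subseteq> {R p | p. p \<in> P}"
  proof
    fix f assume "f \<in> centralizer_in S {L p | p. p \<in> P}"
    then have f_Sym: "f \<in> Sym S" and f_comm: "\<And>r. r \<in> P \<Longrightarrow> f \<circ> L r = L r \<circ> f"
      unfolding centralizer_in_def by blast+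
    have "f (\<phi> id) \<in> S"
      using f_Sym id_in_P S_eq unfolding Sym_def bij_betw_def by blast
    then obtain m where m: "m \<in> P" "f (\<phi> id) = \<phi> m" by (rule S_cases)
    text \<open>A map commuting with all left translations is determined by its value at \<open>\<phi> id\<close>.\<close>
    have "f x = R (inv m) x" for x
    proof (cases "x \<in> S")
      case True
      then obtain q where q: "q \<in> P" "x = \<phi> q" by (rule S_cases)
      have "f x = f (L q (\<phi> id))" using q id_in_P by (simp add: L_\<phi>)
      also have "\<dots> = L q (\<phi> m)" using fun_cong[OF f_comm[OF q(1)]] m by simp
      also have "\<dots> = R (inv m) x" using m q by (simp add: L_\<phi> R_\<phi> inv_in_P)
      finally show ?thesis .
    qed (simp add: Sym_apply_outside[OF f_Sym] R_outside)
    then show "f \<in> {R p | p. p \<in> P}" using m inv_in_P by blast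
  qed
qed

theorem dual_group_L_R: "dual_group S {L p | p. p \<in> P} {R p | p. p \<in> P}"
proof -
  interpret swapped: regular_representations P "\<phi> \<circ> inv" S R L by (rule swap)
  show ?thesis
    unfolding dual_group_def
    using L_Sym R_Sym simply_transitive_L swapped.simply_transitive_L
      centralizer_L swapped.centralizer_L by blast
qed

end

lemma internal_direct_productI:
  assumes comp_left: "\<And>a b. a \<in> A \<Longrightarrow> b \<in> B \<Longrightarrow> F a e\<^sub>B \<circ> F e\<^sub>A b = F a b"
    and comp_right: "\<And>a b. a \<in> A \<Longrightarrow> b \<in> B \<Longrightarrow> F e\<^sub>A b \<circ> F a e\<^sub>B = F a b"
    and units: "e\<^sub>A \<in> A" "e\<^sub>B \<in> B" "F e\<^sub>A e\<^sub>B = id"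
    and trivial_meet: "\<And>a b. a \<in> A \<Longrightarrow> b \<in> B \<Longrightarrow> F a e\<^sub>B = F e\<^sub>A b \<Longrightarrow> F a e\<^sub>B = id"
  shows "internal_direct_product {F a b | a b. a \<in> A \<and> b \<in> B}
           {F a e\<^sub>B | a. a \<in> A} {F e\<^sub>A b | b. b \<in> B}"
  unfolding internal_direct_product_def
proof (intro conjI)
  show "\<forall>k\<in>{F a e\<^sub>B | a. a \<in> A}. \<forall>l\<in>{F e\<^sub>A b | b. b \<in> B}. k \<circ> l = l \<circ> k"
    using comp_left comp_right by auto
  show "{F a e\<^sub>B | a. a \<in> A} \<inter> {F e\<^sub>A b | b. b \<in> B} = {id}"
  proof
    show "{F a e\<^sub>B | a. a \<in> A} \<inter> {F e\<^sub>A b | b. b \<in> B} \<subseteq> {id}"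
      using trivial_meet by blast
    show "{id} \<subseteq> {F a e\<^sub>B | a. a \<in> A} \<inter> {F e\<^sub>A b | b. b \<in> B}"
      using units by (auto intro!: exI[where x = e\<^sub>A] exI[where x = e\<^sub>B])
  qed
  show "{F a b | a b. a \<in> A \<and> b \<in> B} =
      {k \<circ> l | k l. k \<in> {F a e\<^sub>B | a. a \<in> A} \<and> l \<in> {F e\<^sub>A b | b. b \<in> B}}"
    using comp_left by (fastforce simp flip: comp_left)
qed

lemma perm_act_length [simp]: "length (perm_act \<sigma> y) = length y"
  by (simp add: perm_act_def)

lemma perm_act_nth [simp]: "i < length y \<Longrightarrow> perm_act \<sigma> y ! i = y ! inv \<sigma> i"
  by (simp add: perm_act_def)

lemma permutes_lessThan_inv: "\<sigma> permutes {..<n} \<Longrightarrow> i < n \<Longrightarrow> inv \<sigma> i < n"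
  using permutes_in_image[OF permutes_inv] by fastforce

lemma perm_act_comp:
  assumes \<sigma>: "\<sigma> permutes {..<length y}" and \<tau>: "\<tau> permutes {..<length y}"
  shows "perm_act \<sigma> (perm_act \<tau> y) = perm_act (\<sigma> \<circ> \<tau>) y"
  using permutes_lessThan_inv[OF \<sigma>]
  by (intro nth_equalityI) (simp_all add: o_inv_distrib permutes_bij[OF \<sigma>] permutes_bij[OF \<tau>])

lemma perm_act_map:
  "\<sigma> permutes {..<length y} \<Longrightarrow> perm_act \<sigma> (map g y) = map g (perm_act \<sigma> y)"
  by (intro nth_equalityI) (simp_all add: permutes_lessThan_inv)

lemma set_perm_act:
  assumes "\<sigma> permutes {..<length y}"
  shows "set (perm_act \<sigma> y) = set y"
proof -
  have "set (perm_act \<sigma> y) = (!) y ` inv \<sigma> ` {..<length y}"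
    by (simp add: perm_act_def image_image atLeast0LessThan)
  also have "inv \<sigma> ` {..<length y} = {..<length y}"
    by (rule permutes_image[OF permutes_inv[OF assms]])
  also have "(!) y ` {..<length y} = set y"
    by (auto simp: in_set_conv_nth)
  finally show ?thesis .
qed

lemma perm_act_inj:
  assumes "distinct y" and \<sigma>: "\<sigma> permutes {..<length y}" and \<sigma>': "\<sigma>' permutes {..<length y}"
    and eq: "perm_act \<sigma> y = perm_act \<sigma>' y"
  shows "\<sigma> = \<sigma>'"
proof -
  have "inv \<sigma> i = inv \<sigma>' i" for i
  proof (cases "i < length y")
    case True
    then have "y ! inv \<sigma> i = y ! inv \<sigma>' i"
      using arg_cong[OF eq, of "\<lambda>z. z ! i"] by simp
    then show ?thesis
      using \<open>distinct y\<close> True permutes_lessThan_inv[OF \<sigma>] permutes_lessThan_inv[OF \<sigma>']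
      by (simp add: nth_eq_iff_index_eq)
  qed (simp add: permutes_not_in[OF permutes_inv[OF \<sigma>]] permutes_not_in[OF permutes_inv[OF \<sigma>']])
  then have "inv \<sigma> = inv \<sigma>'" by (rule ext)
  then show ?thesis
    using permutes_inv_inv[OF \<sigma>] permutes_inv_inv[OF \<sigma>'] by metis
qed

lemma sg_sg:
  assumes "\<sigma> permutes {..<length y}" "\<nu> permutes {..<length y}"
  shows "sg \<sigma> g (sg \<nu> h y) = sg (\<sigma> \<circ> \<nu>) (g \<circ> h) y"
  using assms by (simp add: sg_def perm_act_map perm_act_comp permutes_compose)

lemma set_sg: "\<sigma> permutes {..<length y} \<Longrightarrow> set (sg \<sigma> g y) = g ` set y"
  by (simp add: sg_def set_perm_act)

lemma sg_in_orbit: "\<sigma> \<in> A \<Longrightarrow> g \<in> H \<Longrightarrow> sg \<sigma> g y \<in> orbit A H y"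
  by (auto simp: orbit_def)

lemma orbit_cases:
  assumes "Y \<in> orbit A H y"
  obtains \<sigma> g where "\<sigma> \<in> A" "g \<in> H" "Y = sg \<sigma> g y"
  using assms unfolding orbit_def by blast

lemma id_in_Sn: "id \<in> Sn n"
  by (simp add: Sn_def)

lemma Sn_comp: "\<sigma> \<in> Sn n \<Longrightarrow> \<tau> \<in> Sn n \<Longrightarrow> \<sigma> \<circ> \<tau> \<in> Sn n"
  by (simp add: Sn_def permutes_compose)

lemma Sn_inv: "\<sigma> \<in> Sn n \<Longrightarrow> inv \<sigma> \<in> Sn n"
  by (simp add: Sn_def permutes_inv)

lemma bij_Sn: "\<sigma> \<in> Sn n \<Longrightarrow> bij \<sigma>"
  by (simp add: Sn_def permutes_bij)

lemma bij_Aff_star: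
  assumes "f \<in> Aff_star"
  shows "bij f"
proof -
  obtain a b :: z12 where f: "f = (\<lambda>k. a * k + b)" and "a dvd 1"
    using assms unfolding Aff_star_def by blast
  then obtain c where c: "a * c = 1" by (metis dvd_def)
  have "c * (a * k) = k" "a * (c * k) = k" for k
    using c by (simp_all add: mult.assoc[symmetric] mult.commute[of c a])
  then show ?thesis
    by (intro o_bij[where g = "\<lambda>k. c * (k - b)"]) (auto simp: f)
qed

locale free_orbit =
  fixes n :: nat and X :: "z12 list" and G :: "(z12 \<Rightarrow> z12) set"
  assumes length_X: "length X = n"
    and distinct_X: "distinct X"
    and bij_G: "g \<in> G \<Longrightarrow> bij g"
    and id_in_G: "id \<in> G"
    and G_comp: "f \<in> G \<Longrightarrow> g \<in> G \<Longrightarrow> f \<circ> g \<in> G"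
    and G_inv: "g \<in> G \<Longrightarrow> inv g \<in> G"
    and free: "g \<in> G \<Longrightarrow> g ` set X = set X \<Longrightarrow> g = id"
begin

lemma Sn_permutes: "\<sigma> \<in> Sn n \<Longrightarrow> \<sigma> permutes {..<length X}"
  by (simp add: Sn_def length_X)

lemma sg_X_sg: "\<sigma> \<in> Sn n \<Longrightarrow> \<nu> \<in> Sn n \<Longrightarrow> sg \<sigma> g (sg \<nu> h X) = sg (\<sigma> \<circ> \<nu>) (g \<circ> h) X"
  by (simp add: sg_sg Sn_permutes)

lemma sg_X_eq_iff:
  assumes \<sigma>: "\<sigma> \<in> Sn n" "\<sigma>' \<in> Sn n" and g: "g \<in> G" "g' \<in> G"
  shows "sg \<sigma> g X = sg \<sigma>' g' X \<longleftrightarrow> \<sigma> = \<sigma>' \<and> g = g'"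
proof
  assume eq: "sg \<sigma> g X = sg \<sigma>' g' X"
  have "g ` set X = g' ` set X"
    using arg_cong[OF eq, of set] set_sg[OF Sn_permutes] \<sigma> by simp
  then have "(inv g' \<circ> g) ` set X = set X"
    using image_inv_f_f[OF bij_is_inj[OF bij_G[OF g(2)]]] by (metis image_comp)
  then have "inv g' \<circ> g = id"
    using free G_comp G_inv g by blast
  moreover have "g' \<circ> inv g' = id"
    using surj_iff bij_is_surj bij_G[OF g(2)] by blast
  ultimately have g_eq: "g = g'"
    by (metis comp_assoc comp_id id_comp)
  have "distinct (map g X)"
    using distinct_X bij_G[OF g(1)] by (simp add: distinct_map bij_def inj_on_def)
  moreover have "perm_act \<sigma> (map g X) = perm_act \<sigma>' (map g X)"
    using eq g_eq by (simp add: sg_def)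
  ultimately have "\<sigma> = \<sigma>'"
    by (intro perm_act_inj) (simp_all add: Sn_permutes \<sigma>)
  with g_eq show "\<sigma> = \<sigma>' \<and> g = g'" by simp
qed simp

lemma rho_sg:
  assumes \<sigma>: "\<sigma> \<in> Sn n" and "\<nu> \<in> Sn n" and g: "g \<in> G" and "h \<in> G"
  shows "rho n G X \<nu> h (sg \<sigma> g X) = sg (\<sigma> \<circ> inv \<nu>) (g \<circ> inv h) X"
proof -
  let ?Z = "sg \<sigma> g (sg (inv \<nu>) (inv h) X)"
  have "rho n G X \<nu> h (sg \<sigma> g X) = (THE Z. \<exists>\<sigma>'\<in>Sn n. \<exists>g'\<in>G.
      sg \<sigma> g X = sg \<sigma>' g' X \<and> Z = sg \<sigma>' g' (sg (inv \<nu>) (inv h) X))"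
    using sg_in_orbit[OF \<sigma> g] by (simp add: rho_def ext_on_def)
  also have "\<dots> = ?Z"
  proof (rule the_equality)
    fix Z assume "\<exists>\<sigma>'\<in>Sn n. \<exists>g'\<in>G. sg \<sigma> g X = sg \<sigma>' g' X \<and> Z = sg \<sigma>' g' (sg (inv \<nu>) (inv h) X)"
    then obtain \<sigma>' g' where "\<sigma>' \<in> Sn n" "g' \<in> G" "sg \<sigma> g X = sg \<sigma>' g' X"
      and Z: "Z = sg \<sigma>' g' (sg (inv \<nu>) (inv h) X)" by blast
    text \<open>The description defining \<open>rho\<close> is unique because \<open>\<sigma>\<close> and \<open>g\<close> are determined by \<open>\<sigma> g X\<close>.\<close>
    then have "\<sigma>' = \<sigma> \<and> g' = g"
      using sg_X_eq_iff[OF \<sigma> _ g] by auto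
    with Z show "Z = ?Z" by simp
  qed (use \<sigma> g in blast)
  also have "\<dots> = sg (\<sigma> \<circ> inv \<nu>) (g \<circ> inv h) X"
    using assms by (simp add: sg_X_sg Sn_inv)
  finally show ?thesis .
qed

lemma rho_outside: "Y \<notin> orbit (Sn n) G X \<Longrightarrow> rho n G X \<nu> h Y = Y"
  by (simp add: rho_def ext_on_def)

lemma rho_comp:
  assumes "\<nu> \<in> Sn n" "\<mu> \<in> Sn n" "h \<in> G" "k \<in> G"
  shows "rho n G X \<nu> h \<circ> rho n G X \<mu> k = rho n G X (\<nu> \<circ> \<mu>) (h \<circ> k)"
proof
  fix Y
  show "(rho n G X \<nu> h \<circ> rho n G X \<mu> k) Y = rho n G X (\<nu> \<circ> \<mu>) (h \<circ> k) Y"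
  proof (cases "Y \<in> orbit (Sn n) G X")
    case True
    then obtain \<sigma> g where "\<sigma> \<in> Sn n" "g \<in> G" "Y = sg \<sigma> g X" by (rule orbit_cases)
    with assms show ?thesis
      by (simp add: rho_sg Sn_comp Sn_inv G_comp G_inv o_inv_distrib bij_Sn bij_G comp_assoc)
  qed (simp add: rho_outside)
qed

lemma rho_id_id: "rho n G X id id = id"
proof
  fix Y
  show "rho n G X id id Y = id Y"
  proof (cases "Y \<in> orbit (Sn n) G X")
    case True
    then obtain \<sigma> g where "\<sigma> \<in> Sn n" "g \<in> G" "Y = sg \<sigma> g X" by (rule orbit_cases)
    then show ?thesis by (simp add: rho_sg id_in_Sn id_in_G)
  qed (simp add: rho_outside)
qed

lemma dual_group_Sn:
  "dual_group (orbit (Sn n) {id} X)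
     {ext_on (orbit (Sn n) {id} X) (sg \<nu> id) | \<nu>. \<nu> \<in> Sn n}
     {ext_on (orbit (Sn n) {id} X) (rho n G X \<nu> id) | \<nu>. \<nu> \<in> Sn n}"
proof -
  interpret regular_representations "Sn n" "\<lambda>\<sigma>. sg \<sigma> id X" "orbit (Sn n) {id} X"
    "\<lambda>\<nu>. ext_on (orbit (Sn n) {id} X) (sg \<nu> id)"
    "\<lambda>\<nu>. ext_on (orbit (Sn n) {id} X) (rho n G X \<nu> id)"
    by unfold_locales
      (auto simp: id_in_Sn Sn_comp Sn_inv bij_Sn inj_on_def sg_X_eq_iff id_in_G orbit_def
        ext_on_def sg_X_sg rho_sg)
  show ?thesis by (rule dual_group_L_R)
qed

lemma dual_group_G:
  "dual_group (orbit {id} G X)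
     {ext_on (orbit {id} G X) (sg id h) | h. h \<in> G}
     {ext_on (orbit {id} G X) (rho n G X id h) | h. h \<in> G}"
proof -
  interpret regular_representations G "\<lambda>h. sg id h X" "orbit {id} G X"
    "\<lambda>h. ext_on (orbit {id} G X) (sg id h)"
    "\<lambda>h. ext_on (orbit {id} G X) (rho n G X id h)"
    by unfold_locales
      (auto simp: id_in_G G_comp G_inv bij_G inj_on_def sg_X_eq_iff id_in_Sn orbit_def
        ext_on_def sg_X_sg rho_sg)
  show ?thesis by (rule dual_group_L_R)
qed

lemma rho_Sn_G_commute:
  "\<nu> \<in> Sn n \<Longrightarrow> h \<in> G \<Longrightarrow> rho n G X \<nu> id \<circ> rho n G X id h = rho n G X id h \<circ> rho n G X \<nu> id"
  by (simp add: rho_comp id_in_Sn id_in_G)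

lemma internal_direct_product_rho:
  "internal_direct_product {rho n G X \<nu> h | \<nu> h. \<nu> \<in> Sn n \<and> h \<in> G}
     {rho n G X \<nu> id | \<nu>. \<nu> \<in> Sn n} {rho n G X id h | h. h \<in> G}"
proof (rule internal_direct_productI)
  fix \<nu> h assume \<nu>: "\<nu> \<in> Sn n" and h: "h \<in> G"
    and eq: "rho n G X \<nu> id = rho n G X id h"
  have "sg (inv \<nu>) id X = sg id (inv h) X"
    using fun_cong[OF eq, of "sg id id X"] \<nu> h by (simp add: rho_sg id_in_Sn id_in_G)
  then have "inv \<nu> = id"
    using \<nu> h by (simp add: sg_X_eq_iff Sn_inv id_in_Sn id_in_G G_inv)
  then have "\<nu> = id"
    by (metis \<nu> bij_Sn inv_id inv_inv_eq)
  then show "rho n G X \<nu> id = id" by (simp add: rho_id_id)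
qed (simp_all add: rho_comp rho_id_id id_in_Sn id_in_G)

lemma rho_conjugate:
  assumes \<sigma>: "\<sigma> \<in> Sn n" and h: "h \<in> G" and Y: "Y \<in> orbit {\<sigma>} G X"
  shows "rho n G X id h Y = sg \<sigma> id (rho n G X id h (sg (inv \<sigma>) id Y))"
proof -
  obtain g where g: "g \<in> G" and "Y = sg \<sigma> g X"
    using Y by (auto elim: orbit_cases)
  moreover have "inv \<sigma> \<circ> \<sigma> = id"
    using bij_Sn[OF \<sigma>] by (simp add: bij_is_inj)
  ultimately show ?thesis
    using \<sigma> h by (simp add: sg_X_sg rho_sg Sn_inv Sn_comp id_in_Sn G_comp G_inv flip: comp_assoc)
qed

end

theorem theorem3p2:
  fixes n :: nat and X :: "z12 list" and G :: "(z12 \<Rightarrow> z12) set"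
  assumes len: "length X = n"
    and dist: "distinct X"
    and G_aff: "G \<subseteq> Aff_star"
    and G_id: "id \<in> G"
    and G_comp: "\<forall>f\<in>G. \<forall>g\<in>G. f \<circ> g \<in> G"
    and G_inv: "\<forall>f\<in>G. inv f \<in> G"
    and free: "\<forall>f\<in>G. f \<noteq> id \<longrightarrow> f ` set X \<noteq> set X"
  shows
    "dual_group (orbit (Sn n) {id} X)
        {ext_on (orbit (Sn n) {id} X) (sg \<nu> id) | \<nu>. \<nu> \<in> Sn n}
        {ext_on (orbit (Sn n) {id} X) (rho n G X \<nu> id) | \<nu>. \<nu> \<in> Sn n}
     \<and> dual_group (orbit {id} G X)
        {ext_on (orbit {id} G X) (sg id h) | h. h \<in> G}
        {ext_on (orbit {id} G X) (rho n G X id h) | h. h \<in> G}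
     \<and> (\<forall>\<nu>\<in>Sn n. \<forall>h\<in>G. rho n G X \<nu> id \<circ> rho n G X id h = rho n G X id h \<circ> rho n G X \<nu> id)
     \<and> internal_direct_product
        {rho n G X \<nu> h | \<nu> h. \<nu> \<in> Sn n \<and> h \<in> G}
        {rho n G X \<nu> id | \<nu>. \<nu> \<in> Sn n}
        {rho n G X id h | h. h \<in> G}
     \<and> (\<forall>\<sigma>\<in>Sn n. \<forall>h\<in>G. \<forall>Y\<in>orbit {\<sigma>} G X.
          rho n G X id h Y = sg \<sigma> id (rho n G X id h (sg (inv \<sigma>) id Y)))"
proof -
  interpret free_orbit n X G
    using assms bij_Aff_star by unfold_locales blast+
  show ?thesis
    using dual_group_Sn dual_group_G rho_Sn_G_commute internal_direct_product_rho rho_conjugate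
    by blast
qed

end
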